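(* Let $c>0$, $0<\lambda<T_M$, and let $f\in C^2(\mathbb R)$ solve $$f''(y)-cf'(y)-f^4(y)=-\int_{-\infty}^\infty E(y-\eta)f^4(\eta)\,d\eta\ (y\in\mathbb R),\qquad 0<\lambda\le f\le T_M.$$ Then there exists $\varepsilon_0=\varepsilon_0(T_M,\lambda,c)>0$ such that for every $\varepsilon<\varepsilon_0$ there exists $L_0=L_0(\varepsilon,T_M,\lambda,c)>0$ with the property that, for every $L>L_0$, if $\operatorname{osc}_{[-L,L]}f<\varepsilon$ then $\operatorname{osc}_{[L,\infty)}f<3\varepsilon$.
   Context: $E(x)=\frac12\int_{|x|}^\infty\frac{e^{-t}}{t}dt$. For $I\subseteq\mathbb R$, $\operatorname{osc}_I f=\sup_{y_1,y_2\in I}|f(y_1)-f(y_2)|$. *)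

theory Defs
  imports "HOL-Analysis.Analysis"
begin

text \<open>The kernel E(x) = 1/2 * integral from |x| to infinity of exp(-t)/t dt
  (Lebesgue integral; E(0) is the divergent value, a single point, irrelevant).\<close>
definition E :: "real \<Rightarrow> real" where
  "E x = 1/2 * (LBINT t:{\<bar>x\<bar><..}. exp (- t) / t)"

definition osc :: "real set \<Rightarrow> (real \<Rightarrow> real) \<Rightarrow> real" where
  "osc I f = Sup {\<bar>f y1 - f y2\<bar> | y1 y2. y1 \<in> I \<and> y2 \<in> I}"

definition C2 :: "(real \<Rightarrow> real) \<Rightarrow> bool" where
  "C2 f \<longleftrightarrow> (\<forall>y. f differentiable (at y)) \<and> (\<forall>y. deriv f differentiable (at y))
      \<and> continuous_on UNIV (deriv (deriv f))"

definition solves :: "real \<Rightarrow> real \<Rightarrow> real \<Rightarrow> (real \<Rightarrow> real) \<Rightarrow> bool" where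
  "solves c lam TM f \<longleftrightarrow> C2 f \<and>
     (\<forall>y. deriv (deriv f) y - c * deriv f y - f y ^ 4
            = - (LINT \<eta>|lborel. E (y - \<eta>) * f \<eta> ^ 4)) \<and>
     (\<forall>y. lam \<le> f y \<and> f y \<le> TM)"

end

theory Submission
  imports Defs
begin

text \<open>Every such solution is constant, so both oscillations vanish. Write the equation as
  \<open>f'' - c f' = N y\<close> with \<open>N y = \<integral> E (y - \<eta>) (f y ^ 4 - f \<eta> ^ 4) d\<eta>\<close>, using \<open>\<integral> E = 1\<close>.
  Testing it against \<open>f - f a\<close> on \<open>[a, b]\<close> gives
  \<open>\<integral>\<^sub>a\<^sup>b f'\<^sup>2 \<le> f' b ^ 2 / (2 c) - \<integral>\<^sub>a\<^sup>b (f - f a) N\<close>. The part of \<open>N\<close> coming from \<open>\<eta> \<in> [a, b]\<close>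
  contributes with a favourable sign, because \<open>E\<close> is even and \<open>t \<mapsto> t\<^sup>4\<close> is monotone; the part
  coming from outside is controlled by the exponential decay of the tails of \<open>E\<close>. Together with
  \<open>\<bar>f'\<bar> \<le> TM\<^sup>4 / c\<close> this first shows \<open>f' \<in> L\<^sup>2\<close>; pushing \<open>a\<close> and \<open>b\<close> far out, where \<open>f\<close> varies
  little over windows of fixed length, it then shows that \<open>\<integral> f'\<^sup>2\<close> is arbitrarily small.\<close>

lemma abs_power_diff_le:
  fixes u v M :: real
  assumes "0 \<le> u" "u \<le> M" "0 \<le> v" "v \<le> M"
  shows "\<bar>u ^ n - v ^ n\<bar> \<le> n * M ^ (n - 1) * \<bar>u - v\<bar>"
proof -
  have term_le: "v ^ (n - Suc i) * u ^ i \<le> M ^ (n - 1)" if "i < n" for i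
  proof -
    have "v ^ (n - Suc i) * u ^ i \<le> M ^ (n - Suc i) * M ^ i"
      using assms by (intro mult_mono power_mono) auto
    also have "\<dots> = M ^ (n - 1)"
      using that by (simp add: power_add[symmetric])
    finally show ?thesis .
  qed
  have "\<bar>\<Sum>i<n. v ^ (n - Suc i) * u ^ i\<bar> = (\<Sum>i<n. v ^ (n - Suc i) * u ^ i)"
    using assms by (intro abs_of_nonneg sum_nonneg) auto
  also have "\<dots> \<le> (\<Sum>i<n. M ^ (n - 1))"
    by (intro sum_mono term_le) auto
  finally have "\<bar>\<Sum>i<n. v ^ (n - Suc i) * u ^ i\<bar> \<le> n * M ^ (n - 1)"
    by simp
  then have "\<bar>u - v\<bar> * \<bar>\<Sum>i<n. v ^ (n - Suc i) * u ^ i\<bar> \<le> \<bar>u - v\<bar> * (n * M ^ (n - 1))"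
    by (intro mult_left_mono) auto
  then show ?thesis
    by (simp add: power_diff_sumr2[of u n v] abs_mult mult.commute)
qed

lemma diff_mult_power_diff_nonneg:
  fixes u v :: real
  assumes "0 \<le> u" "0 \<le> v"
  shows "0 \<le> (u - v) * (u ^ n - v ^ n)"
proof (cases "u \<le> v")
  case True
  then have "u ^ n \<le> v ^ n" using assms by (intro power_mono)
  then show ?thesis using True by (intro mult_nonpos_nonpos) auto
next
  case False
  then have "v ^ n \<le> u ^ n" using assms by (intro power_mono) auto
  then show ?thesis using False by (intro mult_nonneg_nonneg) auto
qed

lemma integral_exp_decay_from_endpoints_le:
  fixes a b :: real
  assumes "a \<le> b"
  shows "integral {a..b} (\<lambda>y. exp (- (y - a) / 2) + exp (- (b - y) / 2)) \<le> 4"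
proof -
  let ?G = "\<lambda>y. - 2 * exp (- (y - a) / 2) + 2 * exp (- (b - y) / 2)"
  have "((\<lambda>y. exp (- (y - a) / 2) + exp (- (b - y) / 2)) has_integral (?G b - ?G a)) {a..b}"
  proof (rule fundamental_theorem_of_calculus[OF assms])
    fix x
    show "(?G has_vector_derivative exp (- (x - a) / 2) + exp (- (b - x) / 2)) (at x within {a..b})"
      unfolding has_real_derivative_iff_has_vector_derivative[symmetric]
      by (auto intro!: derivative_eq_intros simp: field_simps)
  qed
  then have "integral {a..b} (\<lambda>y. exp (- (y - a) / 2) + exp (- (b - y) / 2)) = 4 - 4 * exp (- (b - a) / 2)"
    by (simp add: integral_unique minus_diff_eq)
  then show ?thesis by simp
qed

lemma exists_exp_decay_le:
  fixes K d :: real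
  assumes "0 < K" "0 < d"
  shows "\<exists>l\<ge>0. K * exp (- l / 2) \<le> d"
proof (intro exI conjI)
  let ?l = "2 * \<bar>ln (d / K)\<bar>"
  show "0 \<le> ?l" by simp
  have "exp (- ?l / 2) \<le> exp (ln (d / K))" by simp
  also have "\<dots> = d / K" using assms by simp
  finally show "K * exp (- ?l / 2) \<le> d"
    using assms by (simp add: le_divide_eq mult.commute)
qed

lemma lborel_integral_indicator_Icc:
  fixes g :: "real \<Rightarrow> real"
  assumes "continuous_on {a..b} g"
  shows "integrable lborel (\<lambda>y. indicator {a..b} y * g y)"
    and "(LINT y|lborel. indicator {a..b} y * g y) = integral {a..b} g"
proof -
  have g: "set_integrable lborel {a..b} g"
    by (rule borel_integrable_atLeastAtMost'[OF assms])
  then show "integrable lborel (\<lambda>y. indicator {a..b} y * g y)"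
    unfolding set_integrable_def by simp
  from set_borel_integral_eq_integral(2)[OF g]
  show "(LINT y|lborel. indicator {a..b} y * g y) = integral {a..b} g"
    unfolding set_lebesgue_integral_def by simp
qed

lemma square_diff_le_integral_deriv_square:
  fixes g g' :: "real \<Rightarrow> real"
  assumes uv: "u \<le> v"
    and g: "\<And>x. x \<in> {u..v} \<Longrightarrow> (g has_real_derivative g' x) (at x within {u..v})"
    and g'_cont: "continuous_on {u..v} g'"
  shows "(g v - g u)^2 \<le> (v - u) * integral {u..v} (\<lambda>y. (g' y)^2)"
proof (cases "u = v")
  case False
  with uv have "u < v" by simp
  define m where "m = (g v - g u) / (v - u)"
  define J where "J = integral {u..v} (\<lambda>y. (g' y)^2)"
  have "((\<lambda>y. (g' y)^2) has_integral J) {u..v}"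
    unfolding J_def by (intro integrable_integral integrable_continuous_interval continuous_intros g'_cont)
  moreover have "(g' has_integral (g v - g u)) {u..v}"
    using g by (intro fundamental_theorem_of_calculus[OF uv])
      (auto simp: has_real_derivative_iff_has_vector_derivative[symmetric])
  ultimately have "((\<lambda>y. (g' y)^2 - 2 * m * g' y + m^2) has_integral (J - 2 * m * (g v - g u) + (v - u) * m^2)) {u..v}"
    using has_integral_const_real[of "m^2" u v] uv
    by (intro has_integral_add has_integral_diff has_integral_mult_right) auto
  then have "0 \<le> J - 2 * m * (g v - g u) + (v - u) * m^2"
  proof (rule has_integral_nonneg)
    fix x
    have "(g' x)^2 - 2 * m * g' x + m^2 = (g' x - m)^2"
      by (simp add: power2_eq_square algebra_simps)
    then show "0 \<le> (g' x)^2 - 2 * m * g' x + m^2" by simp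
  qed
  also have "\<dots> = J - (g v - g u)^2 / (v - u)"
  proof -
    have "2 * m * (g v - g u) = 2 * ((g v - g u)^2 / (v - u))"
      by (simp add: m_def power2_eq_square)
    moreover have "(v - u) * m^2 = (g v - g u)^2 / (v - u)"
      using \<open>u < v\<close> by (simp add: m_def power2_eq_square)
    ultimately show ?thesis by simp
  qed
  finally show ?thesis
    using \<open>u < v\<close> by (simp add: J_def field_simps)
qed simp

lemma mono_bounded_eventually_small_increment:
  fixes F :: "real \<Rightarrow> real"
  assumes mono: "\<And>x y. 0 \<le> x \<Longrightarrow> x \<le> y \<Longrightarrow> F x \<le> F y"
    and bounded: "\<And>x. 0 \<le> x \<Longrightarrow> F x \<le> K" and "0 < \<epsilon>"
  shows "\<exists>R\<ge>0. \<forall>x\<ge>R. F x - F R \<le> \<epsilon>"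
proof -
  define S where "S = Sup (F ` {0..})"
  have bdd: "bdd_above (F ` {0..})"
    using bounded by (auto intro!: bdd_aboveI2)
  obtain R where R: "R \<in> {0..}" "S - \<epsilon> < F R"
    using less_cSupD[of "F ` {0..}" "S - \<epsilon>"] \<open>0 < \<epsilon>\<close> unfolding S_def by auto
  have "F x \<le> S" if "x \<ge> R" for x
    unfolding S_def using R(1) that by (intro cSup_upper bdd) auto
  then show ?thesis using R by force
qed

lemma deriv_ge_of_second_order_lower_bound:
  fixes g' g'' :: "real \<Rightarrow> real"
  assumes "0 < c"
    and g': "\<And>x. (g' has_real_derivative g'' x) (at x)"
    and lower: "\<And>x. - H \<le> g'' x - c * g' x"
    and "H / c \<le> g' y" "y \<le> s"
  shows "g' y \<le> g' s"
proof -
  let ?r = "\<lambda>s. exp (- c * s) * (g' s - H / c)"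
  \<comment> \<open>the integrating factor turns the lower bound into monotonicity of \<open>?r\<close>\<close>
  have "?r y \<le> ?r s"
  proof (rule deriv_nonneg_imp_mono[OF _ _ \<open>y \<le> s\<close>])
    fix x
    show "(?r has_real_derivative exp (- c * x) * (g'' x - c * g' x + H)) (at x)"
      using \<open>0 < c\<close> by (auto intro!: derivative_eq_intros g' simp: algebra_simps)
    show "0 \<le> exp (- c * x) * (g'' x - c * g' x + H)"
      using lower[of x] by simp
  qed
  then have "exp (c * (s - y)) * (g' y - H / c) \<le> g' s - H / c"
    by (simp add: exp_diff exp_minus field_simps right_diff_distrib)
  moreover have "g' y - H / c \<le> exp (c * (s - y)) * (g' y - H / c)"
    using mult_right_mono[of 1 "exp (c * (s - y))" "g' y - H / c"] assms by simp
  ultimately show ?thesis by simp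
qed

lemma deriv_le_of_second_order_lower_bound:
  fixes g g' g'' :: "real \<Rightarrow> real"
  assumes "0 < c" "0 \<le> H"
    and g: "\<And>x. (g has_real_derivative g' x) (at x)"
    and g': "\<And>x. (g' has_real_derivative g'' x) (at x)"
    and lower: "\<And>x. - H \<le> g'' x - c * g' x"
    and upper: "\<And>x. g x \<le> M"
  shows "g' y \<le> H / c"
proof (rule ccontr)
  assume "\<not> g' y \<le> H / c"
  define d where "d = g' y"
  have "0 \<le> H / c" using \<open>0 < c\<close> \<open>0 \<le> H\<close> by simp
  with \<open>\<not> g' y \<le> H / c\<close> have "0 < d" "H / c \<le> g' y" unfolding d_def by linarith+
  define s where "s = y + (M - g y + 1) / d"
  have "y \<le> s" using upper[of y] \<open>0 < d\<close> by (simp add: s_def)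
  have "g y - d * y \<le> g s - d * s"
  proof (rule deriv_nonneg_imp_mono[OF _ _ \<open>y \<le> s\<close>])
    fix x
    show "((\<lambda>x. g x - d * x) has_real_derivative (g' x - d)) (at x)"
      by (auto intro!: derivative_eq_intros g)
    assume "x \<in> {y..s}"
    then show "0 \<le> g' x - d"
      using deriv_ge_of_second_order_lower_bound[OF \<open>0 < c\<close> g' lower \<open>H / c \<le> g' y\<close>, of x]
      by (simp add: d_def)
  qed
  moreover have "d * (s - y) = M - g y + 1"
    using \<open>0 < d\<close> by (simp add: s_def)
  ultimately have "M + 1 \<le> g s"
    by (simp add: algebra_simps)
  then show False using upper[of s] by simp
qed

lemma integral_energy_le:
  fixes g g' g'' :: "real \<Rightarrow> real"
  assumes "a \<le> b" "0 < c"
    and g: "\<And>x. (g has_real_derivative g' x) (at x)"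
    and g': "\<And>x. (g' has_real_derivative g'' x) (at x)"
  shows "integral {a..b} (\<lambda>y. (g' y)^2 + (g y - g a) * (g'' y - c * g' y)) \<le> (g' b)^2 / (2 * c)"
proof -
  define \<Phi> where "\<Phi> y = (g y - g a) * g' y - c / 2 * (g y - g a)^2" for y
  have "((\<lambda>y. (g' y)^2 + (g y - g a) * (g'' y - c * g' y)) has_integral (\<Phi> b - \<Phi> a)) {a..b}"
  proof (rule fundamental_theorem_of_calculus[OF \<open>a \<le> b\<close>])
    fix x
    show "(\<Phi> has_vector_derivative (g' x)^2 + (g x - g a) * (g'' x - c * g' x)) (at x within {a..b})"
      unfolding has_real_derivative_iff_has_vector_derivative[symmetric] \<Phi>_def
      by (rule has_field_derivative_at_within)
        (auto intro!: derivative_eq_intros g g' simp: algebra_simps power2_eq_square)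
  qed
  moreover have "\<Phi> a = 0" by (simp add: \<Phi>_def)
  moreover have "\<Phi> b \<le> (g' b)^2 / (2 * c)"
  proof -
    have "0 \<le> (c * (g b - g a) - g' b)^2 / (2 * c)"
      using \<open>0 < c\<close> by simp
    also have "\<dots> = (g' b)^2 / (2 * c) - \<Phi> b"
      unfolding \<Phi>_def using \<open>0 < c\<close> by (simp add: field_simps power2_eq_square)
    finally show ?thesis by simp
  qed
  ultimately show ?thesis by (simp add: integral_unique)
qed

section \<open>The kernel \<open>E\<close>\<close>

lemma E_nonneg: "0 \<le> E x"
  unfolding E_def set_lebesgue_integral_def
  by (auto intro!: integral_nonneg_AE simp: indicator_def)

lemma E_minus: "E (- x) = E x"
  unfolding E_def by simp

lemma E_diff_commute: "E (x - y) = E (y - x)"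
  by (metis E_minus minus_diff_eq)

lemma borel_measurable_E_integrand:
  "(\<lambda>(x, t). if \<bar>x\<bar> < t then exp (- t) / t else (0::real)) \<in> borel_measurable (borel \<Otimes>\<^sub>M borel)"
proof -
  have "(\<lambda>z::real \<times> real. if \<bar>fst z\<bar> < snd z then exp (- snd z) / snd z else 0)
      \<in> borel_measurable (borel \<Otimes>\<^sub>M borel)"
    by (intro measurable_If) measurable
  then show ?thesis by (simp add: case_prod_beta')
qed

lemma E_eq_lborel_integral:
  "E x = 1/2 * (LINT t|lborel. (if \<bar>x\<bar> < t then exp (- t) / t else 0))"
  unfolding E_def set_lebesgue_integral_def
  by (intro arg_cong[where f = "\<lambda>u. 1/2 * u"] Bochner_Integration.integral_cong)
    (auto simp: indicator_def)

lemma borel_measurable_E [measurable]: "E \<in> borel_measurable borel"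
proof -
  have "(\<lambda>x. LINT t|lborel. (if \<bar>x\<bar> < t then exp (- t) / t else (0::real))) \<in> borel_measurable borel"
    by (rule lborel.borel_measurable_lebesgue_integral)
      (subst measurable_cong_sets[OF sets_pair_measure_cong[OF refl sets_lborel] refl],
       rule borel_measurable_E_integrand)
  then show ?thesis
    unfolding E_eq_lborel_integral[abs_def] by measurable
qed

text \<open>\<open>expint z\<close> is the exponential integral \<open>E\<^sub>1 \<bar>z\<bar>\<close>, as an extended nonnegative
  real; it is infinite at \<open>z = 0\<close>, where \<open>E 0\<close> is a junk value.\<close>

definition expint :: "real \<Rightarrow> ennreal" where
  "expint z = (\<integral>\<^sup>+ t. ennreal (if \<bar>z\<bar> < t then exp (- t) / t else 0) \<partial>lborel)"

lemma borel_measurable_expint [measurable]: "expint \<in> borel_measurable borel"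
proof -
  have "(\<lambda>(z, t). ennreal (if \<bar>z\<bar> < t then exp (- t) / t else (0::real)))
      \<in> borel_measurable (borel \<Otimes>\<^sub>M borel)"
    using borel_measurable_E_integrand by measurable
  then have "(\<lambda>(z, t). ennreal (if \<bar>z\<bar> < t then exp (- t) / t else (0::real)))
      \<in> borel_measurable (borel \<Otimes>\<^sub>M lborel)"
    by (subst measurable_cong_sets[OF sets_pair_measure_cong[OF refl sets_lborel] refl])
  then show ?thesis
    unfolding expint_def by (rule lborel.borel_measurable_nn_integral[simplified])
qed

lemma nn_integral_expint_indicator:
  assumes [measurable]: "A \<in> sets borel"
  shows "(\<integral>\<^sup>+ z. expint z * indicator A z \<partial>lborel)
    = (\<integral>\<^sup>+ t. ennreal (exp (- t) / t) * emeasure lborel ({z. \<bar>z\<bar> < t} \<inter> A) \<partial>lborel)"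
proof -
  have "(\<lambda>(z, t). ennreal (if \<bar>z\<bar> < t then exp (- t) / t else 0) * indicator A z)
      \<in> borel_measurable (borel \<Otimes>\<^sub>M borel)"
    using borel_measurable_E_integrand by measurable
  then have meas: "(\<lambda>(z, t). ennreal (if \<bar>z\<bar> < t then exp (- t) / t else 0) * indicator A z)
      \<in> borel_measurable (lborel \<Otimes>\<^sub>M lborel)"
    by (subst measurable_cong_sets[OF sets_pair_measure_cong[OF sets_lborel sets_lborel] refl])
  have inner: "(\<integral>\<^sup>+ z. ennreal (if \<bar>z\<bar> < t then exp (- t) / t else 0) * indicator A z \<partial>lborel)
      = ennreal (exp (- t) / t) * emeasure lborel ({z. \<bar>z\<bar> < t} \<inter> A)" for t
  proof -
    have "(\<integral>\<^sup>+ z. ennreal (if \<bar>z\<bar> < t then exp (- t) / t else 0) * indicator A z \<partial>lborel)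
        = (\<integral>\<^sup>+ z. ennreal (exp (- t) / t) * indicator ({z. \<bar>z\<bar> < t} \<inter> A) z \<partial>lborel)"
      by (intro nn_integral_cong) (auto simp: indicator_def)
    also have "\<dots> = ennreal (exp (- t) / t) * emeasure lborel ({z. \<bar>z\<bar> < t} \<inter> A)"
      by (rule nn_integral_cmult_indicator) measurable
    finally show ?thesis .
  qed
  have "(\<integral>\<^sup>+ z. expint z * indicator A z \<partial>lborel)
      = (\<integral>\<^sup>+ z. (\<integral>\<^sup>+ t. ennreal (if \<bar>z\<bar> < t then exp (- t) / t else 0) * indicator A z \<partial>lborel) \<partial>lborel)"
    unfolding expint_def by (simp add: nn_integral_multc)
  also have "\<dots> = (\<integral>\<^sup>+ t. (\<integral>\<^sup>+ z. ennreal (if \<bar>z\<bar> < t then exp (- t) / t else 0) * indicator A z \<partial>lborel) \<partial>lborel)"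
    using lborel_pair.Fubini'[OF meas] by simp
  finally show ?thesis
    unfolding inner .
qed

lemma nn_integral_exp_minus_atLeast:
  "(\<integral>\<^sup>+ t. ennreal (indicator {s..} t * exp (- t)) \<partial>lborel) = exp (- s)"
  using nn_integral_has_integral_lebesgue[of "{s..}" "\<lambda>t. exp (- t)" "exp (- s)"]
    has_integral_exp_minus_to_infinity[of 1 s] by simp

lemma nn_integral_expint: "(\<integral>\<^sup>+ z. expint z \<partial>lborel) = 2"
proof -
  have AE_eq: "AE t in lborel. ennreal (exp (- t) / t) * emeasure lborel ({z. \<bar>z\<bar> < t} \<inter> UNIV)
      = 2 * ennreal (indicator {0..} t * exp (- t))"
    using AE_lborel_singleton[of 0]
  proof eventually_elim
    case (elim t)
    show ?case
    proof (cases "0 < t")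
      case True
      have "{z. \<bar>z\<bar> < t} \<inter> UNIV = {- t<..<t}" by auto
      then have "emeasure lborel ({z. \<bar>z\<bar> < t} \<inter> UNIV) = ennreal (2 * t)"
        using True by (simp add: emeasure_lborel_Ioo)
      then show ?thesis
        using True by (simp add: ennreal_mult'[symmetric] ennreal_mult[symmetric] indicator_def mult.commute)
          (simp add: ennreal_mult)
    next
      case False
      then have "{z. \<bar>z\<bar> < t} \<inter> UNIV = {}" by auto
      then show ?thesis using False elim by (simp add: indicator_def)
    qed
  qed
  have "(\<integral>\<^sup>+ z. expint z \<partial>lborel) = (\<integral>\<^sup>+ z. expint z * indicator UNIV z \<partial>lborel)"
    by simp
  also have "\<dots> = (\<integral>\<^sup>+ t. ennreal (exp (- t) / t) * emeasure lborel ({z. \<bar>z\<bar> < t} \<inter> UNIV) \<partial>lborel)"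
    by (rule nn_integral_expint_indicator) simp
  also have "\<dots> = (\<integral>\<^sup>+ t. 2 * ennreal (indicator {0..} t * exp (- t)) \<partial>lborel)"
    by (rule nn_integral_cong_AE[OF AE_eq])
  also have "\<dots> = 2"
    by (subst nn_integral_cmult) (auto simp: nn_integral_exp_minus_atLeast)
  finally show ?thesis .
qed

lemma nn_integral_expint_tail:
  assumes "0 \<le> s"
  shows "(\<integral>\<^sup>+ z. expint z * indicator {s<..} z \<partial>lborel) \<le> exp (- s)"
proof -
  have "ennreal (exp (- t) / t) * emeasure lborel ({z. \<bar>z\<bar> < t} \<inter> {s<..})
      \<le> ennreal (indicator {s..} t * exp (- t))" for t
  proof (cases "s < t")
    case True
    have "{z. \<bar>z\<bar> < t} \<inter> {s<..} = {s<..<t}" using assms by auto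
    then have "emeasure lborel ({z. \<bar>z\<bar> < t} \<inter> {s<..}) = ennreal (t - s)"
      using True by (simp add: emeasure_lborel_Ioo)
    moreover have "exp (- t) / t * (t - s) \<le> exp (- t)"
    proof -
      have "exp (- t) / t * (t - s) = exp (- t) * ((t - s) / t)" by simp
      also have "\<dots> \<le> exp (- t) * 1"
        using True assms by (intro mult_left_mono) auto
      finally show ?thesis by simp
    qed
    ultimately show ?thesis
      using True assms by (simp add: ennreal_mult[symmetric] indicator_def)
  next
    case False
    then have "{z. \<bar>z\<bar> < t} \<inter> {s<..} = {}" by auto
    then show ?thesis by simp
  qed
  then have "(\<integral>\<^sup>+ z. expint z * indicator {s<..} z \<partial>lborel)
      \<le> (\<integral>\<^sup>+ t. ennreal (indicator {s..} t * exp (- t)) \<partial>lborel)"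
    unfolding nn_integral_expint_indicator[OF borel_open[OF open_greaterThan]]
    by (intro nn_integral_mono)
  then show ?thesis
    by (simp add: nn_integral_exp_minus_atLeast)
qed

lemma AE_expint_finite: "AE z in lborel. expint z \<noteq> \<infinity>"
  by (rule nn_integral_PInf_AE) (auto simp: nn_integral_expint)

lemma E_eq_half_expint: "AE z in lborel. ennreal (E z) = expint z / 2"
  using AE_expint_finite
proof eventually_elim
  case (elim z)
  have "E z = 1/2 * enn2real (expint z)"
    unfolding E_eq_lborel_integral expint_def by (subst integral_eq_nn_integral) auto
  then have E_eq: "E z = enn2real (expint z) / 2" by simp
  have "ennreal (E z) = ennreal (enn2real (expint z)) / 2"
    unfolding E_eq by (subst divide_ennreal[symmetric]) auto
  also have "\<dots> = expint z / 2"
    using elim by (simp add: less_top)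
  finally show ?case .
qed

lemma nn_integral_E: "(\<integral>\<^sup>+ z. ennreal (E z) \<partial>lborel) = 1"
proof -
  have "(\<integral>\<^sup>+ z. ennreal (E z) \<partial>lborel) = (\<integral>\<^sup>+ z. expint z / 2 \<partial>lborel)"
    by (rule nn_integral_cong_AE[OF E_eq_half_expint])
  also have "\<dots> = (\<integral>\<^sup>+ z. expint z \<partial>lborel) / 2"
    by (simp add: divide_ennreal_def nn_integral_multc)
  finally show ?thesis by (simp add: nn_integral_expint)
qed

lemma integrable_E: "integrable lborel E"
  by (rule integrableI_nonneg) (auto simp: E_nonneg nn_integral_E)

lemma integral_E: "(LINT z|lborel. E z) = 1"
  by (subst integral_eq_nn_integral) (auto simp: E_nonneg nn_integral_E)

definition E_tail :: "real \<Rightarrow> real" where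
  "E_tail s = (LINT z|lborel. indicator {s<..} z * E z)"

lemma integrable_E_tail: "integrable lborel (\<lambda>z. indicator {s<..} z * E z)"
  by (rule Bochner_Integration.integrable_bound[OF integrable_E])
    (auto simp: indicator_def E_nonneg)

lemma E_tail_le:
  assumes "0 \<le> s"
  shows "E_tail s \<le> exp (- s) / 2"
proof -
  have "ennreal (E_tail s) = (\<integral>\<^sup>+ z. ennreal (indicator {s<..} z * E z) \<partial>lborel)"
    unfolding E_tail_def
    by (rule nn_integral_eq_integral[symmetric, OF integrable_E_tail]) (auto simp: E_nonneg)
  also have "\<dots> = (\<integral>\<^sup>+ z. expint z * indicator {s<..} z / 2 \<partial>lborel)"
    by (rule nn_integral_cong_AE) (use E_eq_half_expint in \<open>eventually_elim, auto simp: indicator_def\<close>)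
  also have "\<dots> = (\<integral>\<^sup>+ z. expint z * indicator {s<..} z \<partial>lborel) / 2"
    by (simp add: divide_ennreal_def nn_integral_multc)
  also have "\<dots> \<le> ennreal (exp (- s)) / 2"
    by (intro divide_right_mono_ennreal nn_integral_expint_tail assms)
  finally have "ennreal (E_tail s) \<le> ennreal (exp (- s) / 2)"
    using divide_ennreal[of "exp (- s)" 2] by simp
  then show ?thesis by (subst (asm) ennreal_le_iff) auto
qed

lemma integrable_E_shift: "integrable lborel (\<lambda>\<eta>. E (y - \<eta>))"
  using lborel_integrable_real_affine_iff[of "-1" E y] integrable_E by simp

lemma integral_E_shift: "(LINT \<eta>|lborel. E (y - \<eta>)) = 1"
  using lborel_integral_real_affine[of "-1" E y] integral_E by simp

lemma integrable_if_bounded_by_E_shift: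
  fixes g :: "real \<Rightarrow> real"
  assumes "g \<in> borel_measurable borel" and bound: "\<And>\<eta>. \<bar>g \<eta>\<bar> \<le> K * E (y - \<eta>)"
  shows "integrable lborel g"
proof (rule Bochner_Integration.integrable_bound[OF integrable_mult_right[of K, OF integrable_E_shift[of y]]])
  have "\<bar>g \<eta>\<bar> \<le> \<bar>K * E (y - \<eta>)\<bar>" for \<eta>
    using bound[of \<eta>] by linarith
  then show "AE \<eta> in lborel. norm (g \<eta>) \<le> norm (K * E (y - \<eta>))"
    by simp
qed (use assms in simp)

lemma
  shows integrable_E_shift_lessThan: "integrable lborel (\<lambda>\<eta>. indicator {..<a} \<eta> * E (y - \<eta>))"
    and integral_E_shift_lessThan: "(LINT \<eta>|lborel. indicator {..<a} \<eta> * E (y - \<eta>)) = E_tail (y - a)"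
proof -
  let ?g = "\<lambda>z. indicator {y - a<..} z * E z"
  have eq: "(\<lambda>\<eta>. indicator {..<a} \<eta> * E (y - \<eta>)) = (\<lambda>\<eta>. ?g (y + (-1) * \<eta>))"
    by (auto simp: indicator_def)
  show "integrable lborel (\<lambda>\<eta>. indicator {..<a} \<eta> * E (y - \<eta>))"
    unfolding eq using lborel_integrable_real_affine_iff[of "-1" ?g y] integrable_E_tail by simp
  show "(LINT \<eta>|lborel. indicator {..<a} \<eta> * E (y - \<eta>)) = E_tail (y - a)"
    unfolding eq E_tail_def using lborel_integral_real_affine[of "-1" ?g y] by simp
qed

lemma
  shows integrable_E_shift_greaterThan: "integrable lborel (\<lambda>\<eta>. indicator {b<..} \<eta> * E (y - \<eta>))"
    and integral_E_shift_greaterThan: "(LINT \<eta>|lborel. indicator {b<..} \<eta> * E (y - \<eta>)) = E_tail (b - y)"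
proof -
  let ?g = "\<lambda>z. indicator {b - y<..} z * E z"
  have eq: "(\<lambda>\<eta>. indicator {b<..} \<eta> * E (y - \<eta>)) = (\<lambda>\<eta>. ?g (- y + 1 * \<eta>))"
    by (auto simp: indicator_def E_diff_commute[of y])
  show "integrable lborel (\<lambda>\<eta>. indicator {b<..} \<eta> * E (y - \<eta>))"
    unfolding eq using lborel_integrable_real_affine_iff[of 1 ?g "- y"] integrable_E_tail by simp
  show "(LINT \<eta>|lborel. indicator {b<..} \<eta> * E (y - \<eta>)) = E_tail (b - y)"
    unfolding eq E_tail_def using lborel_integral_real_affine[of 1 ?g "- y"] by simp
qed

lemma integrable_lborel_pair_if_bounded_by_E:
  fixes F :: "real \<Rightarrow> real \<Rightarrow> real"
  assumes [measurable]: "A \<in> sets borel" and A_finite: "emeasure lborel A < \<infinity>"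
    and F_meas: "(\<lambda>(y, \<eta>). F y \<eta>) \<in> borel_measurable (borel \<Otimes>\<^sub>M borel)"
    and "0 \<le> C" and F_bound: "\<And>y \<eta>. \<bar>F y \<eta>\<bar> \<le> C * indicator A y * E (y - \<eta>)"
  shows "integrable (lborel \<Otimes>\<^sub>M lborel) (\<lambda>(y, \<eta>). F y \<eta>)"
proof (rule lborel_pair.Fubini_integrable)
  show "(\<lambda>(y, \<eta>). F y \<eta>) \<in> borel_measurable (lborel \<Otimes>\<^sub>M lborel)"
    using F_meas by (subst measurable_cong_sets[OF sets_pair_measure_cong[OF sets_lborel sets_lborel] refl])
  have "\<bar>F y \<eta>\<bar> \<le> C * E (y - \<eta>)" for y \<eta>
    using F_bound[of y \<eta>] E_nonneg[of "y - \<eta>"] \<open>0 \<le> C\<close> by (cases "y \<in> A") auto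
  then have int_row: "integrable lborel (\<lambda>\<eta>. F y \<eta>)" for y
    using measurable_Pair2[OF F_meas, of y] by (intro integrable_if_bounded_by_E_shift[where y = y]) auto
  then show "AE y in lborel. integrable lborel (\<lambda>\<eta>. (\<lambda>(y, \<eta>). F y \<eta>) (y, \<eta>))"
    by simp
  have "(\<lambda>(y, \<eta>). norm (F y \<eta>)) \<in> borel_measurable (borel \<Otimes>\<^sub>M borel)"
    using F_meas by measurable
  then have "(\<lambda>(y, \<eta>). norm (F y \<eta>)) \<in> borel_measurable (borel \<Otimes>\<^sub>M lborel)"
    by (subst measurable_cong_sets[OF sets_pair_measure_cong[OF refl sets_lborel] refl])
  then have meas: "(\<lambda>y. LINT \<eta>|lborel. norm (F y \<eta>)) \<in> borel_measurable lborel"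
    using lborel.borel_measurable_lebesgue_integral[of "\<lambda>y \<eta>. norm (F y \<eta>)" borel] by simp
  have row_le: "(LINT \<eta>|lborel. norm (F y \<eta>)) \<le> C * indicator A y" for y
  proof -
    have "(LINT \<eta>|lborel. norm (F y \<eta>)) \<le> (LINT \<eta>|lborel. C * indicator A y * E (y - \<eta>))"
      by (intro integral_mono integrable_norm int_row integrable_mult_right integrable_E_shift)
        (use F_bound in auto)
    then show ?thesis by (simp add: integral_E_shift)
  qed
  show "integrable lborel (\<lambda>y. LINT \<eta>|lborel. norm ((\<lambda>(y, \<eta>). F y \<eta>) (y, \<eta>)))"
  proof (rule Bochner_Integration.integrable_bound)
    show "integrable lborel (\<lambda>y. C * indicator A y)"
      using A_finite by (intro integrable_mult_right integrable_real_indicator) auto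
    show "AE y in lborel. norm (LINT \<eta>|lborel. norm ((\<lambda>(y, \<eta>). F y \<eta>) (y, \<eta>))) \<le> norm (C * indicator A y)"
      using row_le \<open>0 \<le> C\<close> by (auto intro!: AE_I2 simp: integral_nonneg_AE)
  qed (use meas in simp)
qed

lemma lborel_double_integral_nonneg_by_symmetry:
  fixes F :: "real \<Rightarrow> real \<Rightarrow> real"
  assumes A: "A \<in> sets borel" "emeasure lborel A < \<infinity>"
    and F_meas: "(\<lambda>(y, \<eta>). F y \<eta>) \<in> borel_measurable (borel \<Otimes>\<^sub>M borel)"
    and "0 \<le> C" and F_bound: "\<And>y \<eta>. \<bar>F y \<eta>\<bar> \<le> C * indicator A y * E (y - \<eta>)"
    and symmetrized_nonneg: "\<And>y \<eta>. 0 \<le> F y \<eta> + F \<eta> y"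
  shows "0 \<le> (LINT y|lborel. LINT \<eta>|lborel. F y \<eta>)"
proof -
  have int_prod: "integrable (lborel \<Otimes>\<^sub>M lborel) (\<lambda>(y, \<eta>). F y \<eta>)"
    by (rule integrable_lborel_pair_if_bounded_by_E[OF A F_meas \<open>0 \<le> C\<close> F_bound])
  have F_le_E: "\<bar>F y \<eta>\<bar> \<le> C * E (y - \<eta>)" for y \<eta>
    using F_bound[of y \<eta>] E_nonneg[of "y - \<eta>"] \<open>0 \<le> C\<close> by (cases "y \<in> A") auto
  have int_row: "integrable lborel (\<lambda>\<eta>. F y \<eta>)" and int_col: "integrable lborel (\<lambda>\<eta>. F \<eta> y)" for y
    using measurable_Pair2[OF F_meas, of y] measurable_Pair1[OF F_meas, of y] F_le_E
    by (auto intro!: integrable_if_bounded_by_E_shift[where y = y] simp: E_diff_commute)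
  define S where "S = (LINT y|lborel. LINT \<eta>|lborel. F y \<eta>)"
  have S_swap: "S = (LINT y|lborel. LINT \<eta>|lborel. F \<eta> y)"
    unfolding S_def using lborel_pair.Fubini_integral[OF int_prod] by simp
  have "2 * S = (LINT y|lborel. (LINT \<eta>|lborel. F y \<eta>) + (LINT \<eta>|lborel. F \<eta> y))"
    using Bochner_Integration.integral_add[OF lborel_pair.integrable_fst[OF int_prod]
        lborel_pair.integrable_snd[OF int_prod]] S_swap
    by (simp add: S_def)
  also have "\<dots> = (LINT y|lborel. LINT \<eta>|lborel. F y \<eta> + F \<eta> y)"
    by (intro Bochner_Integration.integral_cong refl Bochner_Integration.integral_add[symmetric] int_row int_col)
  also have "\<dots> \<ge> 0"
    by (intro integral_nonneg_AE AE_I2 symmetrized_nonneg)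
  finally show ?thesis by (simp add: S_def)
qed

section \<open>Bounded travelling waves are constant\<close>

text \<open>\<open>exchange f S y\<close> is the contribution of \<open>\<eta> \<in> S\<close> to the right-hand side
  \<open>f y ^ 4 - \<integral> E (y - \<eta>) f \<eta> ^ 4 d\<eta>\<close> of the equation (recall \<open>\<integral> E = 1\<close>).\<close>

definition exchange :: "(real \<Rightarrow> real) \<Rightarrow> real set \<Rightarrow> real \<Rightarrow> real" where
  "exchange f S y = (LINT \<eta>|lborel. indicator S \<eta> * E (y - \<eta>) * (f y ^ 4 - f \<eta> ^ 4))"

locale travelling_wave =
  fixes c lam TM :: real and f :: "real \<Rightarrow> real"
  assumes c_pos: "0 < c" and lam_pos: "0 < lam" and solves: "solves c lam TM f"
begin

lemma f_le: "f y \<le> TM"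
  and f_nonneg: "0 \<le> f y"
  using solves lam_pos unfolding solves_def by (auto intro: order_trans[of 0 lam])

lemma TM_pos: "0 < TM"
  using solves lam_pos unfolding solves_def by (meson less_le_trans)

lemma has_deriv_f: "(f has_real_derivative deriv f y) (at y)"
  using solves unfolding solves_def C2_def by (simp add: DERIV_deriv_iff_real_differentiable)

lemma has_deriv_deriv_f: "(deriv f has_real_derivative deriv (deriv f) y) (at y)"
  using solves unfolding solves_def C2_def by (simp add: DERIV_deriv_iff_real_differentiable)

lemma continuous_on_f: "continuous_on A f"
  using has_deriv_f by (meson DERIV_isCont continuous_at_imp_continuous_on)

lemma continuous_on_deriv_f: "continuous_on A (deriv f)"
  using has_deriv_deriv_f by (meson DERIV_isCont continuous_at_imp_continuous_on)

lemma continuous_on_deriv2_f: "continuous_on A (deriv (deriv f))"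
  using solves unfolding solves_def C2_def by (meson continuous_on_subset top_greatest)

lemma borel_measurable_f [measurable]: "f \<in> borel_measurable borel"
  by (rule borel_measurable_continuous_onI[OF continuous_on_f])

lemma ode: "deriv (deriv f) y - c * deriv f y = f y ^ 4 - (LINT \<eta>|lborel. E (y - \<eta>) * f \<eta> ^ 4)"
  using solves unfolding solves_def by (auto simp: algebra_simps)

lemma abs_f_diff_le: "\<bar>f y - k\<bar> \<le> TM + \<bar>k\<bar>"
  using f_nonneg[of y] f_le[of y] by linarith

lemma abs_power4_diff_le: "\<bar>f y ^ 4 - f \<eta> ^ 4\<bar> \<le> TM ^ 4"
proof -
  have "0 \<le> f y ^ 4" "f y ^ 4 \<le> TM ^ 4" "0 \<le> f \<eta> ^ 4" "f \<eta> ^ 4 \<le> TM ^ 4"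
    using f_nonneg f_le by (auto intro: power_mono)
  then show ?thesis by linarith
qed

lemma abs_exchange_integrand_le:
  "\<bar>indicator S \<eta> * E (y - \<eta>) * (f y ^ 4 - f \<eta> ^ 4)\<bar> \<le> TM ^ 4 * E (y - \<eta>)"
  using mult_left_mono[OF abs_power4_diff_le E_nonneg] E_nonneg[of "y - \<eta>"] TM_pos
  by (auto simp: abs_mult indicator_def mult.commute)

lemma integrable_exchange_integrand:
  assumes [measurable]: "S \<in> sets borel"
  shows "integrable lborel (\<lambda>\<eta>. indicator S \<eta> * E (y - \<eta>) * (f y ^ 4 - f \<eta> ^ 4))"
  by (rule integrable_if_bounded_by_E_shift[where y = y and K = "TM ^ 4"])
    (measurable, rule abs_exchange_integrand_le)

lemma abs_exchange_le:
  assumes "S \<in> sets borel"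
  shows "\<bar>exchange f S y\<bar> \<le> TM ^ 4"
proof -
  have "\<bar>exchange f S y\<bar> \<le> (LINT \<eta>|lborel. \<bar>indicator S \<eta> * E (y - \<eta>) * (f y ^ 4 - f \<eta> ^ 4)\<bar>)"
    unfolding exchange_def by (rule integral_abs_bound)
  also have "\<dots> \<le> (LINT \<eta>|lborel. TM ^ 4 * E (y - \<eta>))"
    by (intro integral_mono integrable_abs integrable_exchange_integrand assms
        integrable_mult_right integrable_E_shift abs_exchange_integrand_le)
  finally show ?thesis by (simp add: integral_E_shift)
qed

lemma borel_measurable_exchange [measurable]:
  assumes [measurable]: "S \<in> sets borel"
  shows "exchange f S \<in> borel_measurable borel"
proof -
  have "(\<lambda>(y, \<eta>). indicator S \<eta> * E (y - \<eta>) * (f y ^ 4 - f \<eta> ^ 4)) \<in> borel_measurable (borel \<Otimes>\<^sub>M lborel)"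
    by (subst measurable_cong_sets[OF sets_pair_measure_cong[OF refl sets_lborel] refl]) measurable
  then show ?thesis
    unfolding exchange_def[abs_def] by (rule lborel.borel_measurable_lebesgue_integral[simplified])
qed

lemma ode_eq_exchange:
  assumes [measurable]: "S \<in> sets borel"
  shows "deriv (deriv f) y - c * deriv f y = exchange f S y + exchange f (- S) y"
proof -
  have int_conv: "integrable lborel (\<lambda>\<eta>. E (y - \<eta>) * f \<eta> ^ 4)"
  proof (rule integrable_if_bounded_by_E_shift[where y = y and K = "TM ^ 4"])
    show "\<bar>E (y - \<eta>) * f \<eta> ^ 4\<bar> \<le> TM ^ 4 * E (y - \<eta>)" for \<eta>
      using mult_left_mono[OF power_mono[OF f_le f_nonneg, of \<eta> 4] E_nonneg[of "y - \<eta>"]]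
        E_nonneg[of "y - \<eta>"] f_nonneg[of \<eta>]
      by (simp add: abs_mult mult.commute)
  qed measurable
  have "(LINT \<eta>|lborel. E (y - \<eta>) * (f y ^ 4 - f \<eta> ^ 4))
      = f y ^ 4 * (LINT \<eta>|lborel. E (y - \<eta>)) - (LINT \<eta>|lborel. E (y - \<eta>) * f \<eta> ^ 4)"
    by (simp add: right_diff_distrib Bochner_Integration.integral_diff int_conv integrable_E_shift mult.commute)
  also have "\<dots> = deriv (deriv f) y - c * deriv f y"
    by (simp add: ode integral_E_shift)
  finally have "deriv (deriv f) y - c * deriv f y = (LINT \<eta>|lborel. E (y - \<eta>) * (f y ^ 4 - f \<eta> ^ 4))" ..
  also have "\<dots> = (LINT \<eta>|lborel. indicator S \<eta> * E (y - \<eta>) * (f y ^ 4 - f \<eta> ^ 4)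
      + indicator (- S) \<eta> * E (y - \<eta>) * (f y ^ 4 - f \<eta> ^ 4))"
    by (intro Bochner_Integration.integral_cong) (auto simp: indicator_def)
  also have "\<dots> = exchange f S y + exchange f (- S) y"
    unfolding exchange_def by (intro Bochner_Integration.integral_add integrable_exchange_integrand) auto
  finally show ?thesis .
qed

lemma abs_deriv_le: "\<bar>deriv f y\<bar> \<le> TM ^ 4 / c"
proof -
  have ode_bound: "\<bar>deriv (deriv f) x - c * deriv f x\<bar> \<le> TM ^ 4" for x
    using ode_eq_exchange[of UNIV x] abs_exchange_le[of UNIV x] by (simp add: exchange_def)
  have "deriv f y \<le> TM ^ 4 / c"
  proof (rule deriv_le_of_second_order_lower_bound[OF c_pos _ has_deriv_f has_deriv_deriv_f _ f_le])
    show "- (TM ^ 4) \<le> deriv (deriv f) x - c * deriv f x" for x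
      using ode_bound[of x] by linarith
  qed (use TM_pos in simp)
  moreover have "- deriv f y \<le> TM ^ 4 / c"
  proof (rule deriv_le_of_second_order_lower_bound[where g = "\<lambda>x. - f x" and g' = "\<lambda>x. - deriv f x"
        and g'' = "\<lambda>x. - deriv (deriv f) x" and M = 0, OF c_pos])
    show "- (TM ^ 4) \<le> - deriv (deriv f) x - c * - deriv f x" for x
      using ode_bound[of x] by linarith
  qed (use TM_pos f_nonneg in \<open>auto intro: DERIV_minus has_deriv_f has_deriv_deriv_f\<close>)
  ultimately show ?thesis by simp
qed

lemma integrable_weighted_exchange:
  assumes [measurable]: "S \<in> sets borel"
  shows "integrable lborel (\<lambda>y. indicator {a..b} y * (f y - k) * exchange f S y)"
proof (rule Bochner_Integration.integrable_bound)
  show "integrable lborel (\<lambda>y. (TM + \<bar>k\<bar>) * TM ^ 4 * indicator {a..b} y)"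
    by (intro integrable_mult_right integrable_real_indicator) (auto simp: emeasure_lborel_Icc_eq)
  have "\<bar>(f y - k) * exchange f S y\<bar> \<le> (TM + \<bar>k\<bar>) * TM ^ 4" for y
    unfolding abs_mult by (intro mult_mono abs_f_diff_le abs_exchange_le) (use TM_pos in auto)
  then show "AE y in lborel. norm (indicator {a..b} y * (f y - k) * exchange f S y)
      \<le> norm ((TM + \<bar>k\<bar>) * TM ^ 4 * indicator {a..b} y)"
    using TM_pos by (auto simp: indicator_def abs_mult)
qed measurable

text \<open>Symmetrizing in \<open>(y, \<eta>)\<close> turns the double integrand into
  \<open>E (y - \<eta>) (f y - f \<eta>) (f y ^ 4 - f \<eta> ^ 4) \<ge> 0\<close>.\<close>

lemma integral_weighted_exchange_inside_nonneg:
  "0 \<le> (LINT y|lborel. indicator {a..b} y * (f y - k) * exchange f {a..b} y)"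
proof -
  define F where "F y \<eta> = indicator {a..b} y * indicator {a..b} \<eta> * E (y - \<eta>) * ((f y - k) * (f y ^ 4 - f \<eta> ^ 4))"
    for y \<eta>
  have inner: "(LINT \<eta>|lborel. F y \<eta>) = indicator {a..b} y * (f y - k) * exchange f {a..b} y" for y
  proof -
    have "F y = (\<lambda>\<eta>. (indicator {a..b} y * (f y - k)) * (indicator {a..b} \<eta> * E (y - \<eta>) * (f y ^ 4 - f \<eta> ^ 4)))"
      by (simp add: F_def fun_eq_iff ac_simps)
    then show ?thesis by (simp add: exchange_def)
  qed
  have "0 \<le> (LINT y|lborel. LINT \<eta>|lborel. F y \<eta>)"
  proof (rule lborel_double_integral_nonneg_by_symmetry[where A = "{a..b}" and C = "(TM + \<bar>k\<bar>) * TM ^ 4"])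
    show "(\<lambda>(y, \<eta>). F y \<eta>) \<in> borel_measurable (borel \<Otimes>\<^sub>M borel)"
      unfolding F_def by measurable
    show "\<bar>F y \<eta>\<bar> \<le> (TM + \<bar>k\<bar>) * TM ^ 4 * indicator {a..b} y * E (y - \<eta>)" for y \<eta>
    proof -
      have "\<bar>(f y - k) * (f y ^ 4 - f \<eta> ^ 4)\<bar> \<le> (TM + \<bar>k\<bar>) * TM ^ 4"
        unfolding abs_mult by (intro mult_mono abs_f_diff_le abs_power4_diff_le) (use TM_pos in auto)
      then have "E (y - \<eta>) * \<bar>(f y - k) * (f y ^ 4 - f \<eta> ^ 4)\<bar> \<le> E (y - \<eta>) * ((TM + \<bar>k\<bar>) * TM ^ 4)"
        by (intro mult_left_mono E_nonneg)
      then show ?thesis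
        using E_nonneg[of "y - \<eta>"] TM_pos
        by (cases "y \<in> {a..b} \<and> \<eta> \<in> {a..b}") (auto simp: F_def abs_mult mult.commute)
    qed
    show "0 \<le> F y \<eta> + F \<eta> y" for y \<eta>
    proof -
      have "F y \<eta> + F \<eta> y = indicator {a..b} y * indicator {a..b} \<eta> * E (y - \<eta>)
          * ((f y - f \<eta>) * (f y ^ 4 - f \<eta> ^ 4))"
        unfolding F_def using E_diff_commute[of \<eta> y] by (simp add: algebra_simps)
      then show ?thesis
        using diff_mult_power_diff_nonneg[OF f_nonneg f_nonneg, of y \<eta> 4] E_nonneg[of "y - \<eta>"]
        by (simp add: indicator_def)
    qed
  qed (auto simp: TM_pos less_imp_le emeasure_lborel_Icc_eq)
  then show ?thesis
    unfolding inner .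
qed

lemma abs_exchange_outside_integrand_le:
  assumes y: "a \<le> y" "y \<le> b" and "0 \<le> \<delta>"
    and close: "\<And>\<eta>. \<eta> \<notin> {a..b} \<Longrightarrow> \<bar>y - \<eta>\<bar> \<le> l \<Longrightarrow> \<bar>f y ^ 4 - f \<eta> ^ 4\<bar> \<le> \<delta>"
  shows "\<bar>indicator (- {a..b}) \<eta> * E (y - \<eta>) * (f y ^ 4 - f \<eta> ^ 4)\<bar>
    \<le> \<delta> * (indicator {..<a} \<eta> * E (y - \<eta>)) + \<delta> * (indicator {b<..} \<eta> * E (y - \<eta>))
      + TM ^ 4 * (indicator {..<min a (y - l)} \<eta> * E (y - \<eta>))
      + TM ^ 4 * (indicator {max b (y + l)<..} \<eta> * E (y - \<eta>))" (is "_ \<le> ?B")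
proof (cases "\<eta> \<in> {a..b}")
  case True
  then show ?thesis
    using E_nonneg[of "y - \<eta>"] \<open>0 \<le> \<delta>\<close> TM_pos y by (auto simp: indicator_def)
next
  case False
  define far :: real where "far = indicator ({..<min a (y - l)} \<union> {max b (y + l)<..}) \<eta>"
  have "\<bar>f y ^ 4 - f \<eta> ^ 4\<bar> \<le> \<delta> + TM ^ 4 * far"
  proof (cases "\<bar>y - \<eta>\<bar> \<le> l")
    case True
    have "0 \<le> TM ^ 4 * far" using TM_pos by (simp add: far_def)
    then show ?thesis using close[OF False True] by linarith
  next
    case False
    then have "far = 1" using \<open>\<eta> \<notin> {a..b}\<close> y by (auto simp: far_def indicator_def abs_if)
    then show ?thesis using abs_power4_diff_le[of y \<eta>] \<open>0 \<le> \<delta>\<close> by simp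
  qed
  moreover have "?B = E (y - \<eta>) * (\<delta> + TM ^ 4 * far)"
  proof (cases "\<eta> < a")
    case True
    then have "\<not> b < \<eta>" "\<not> max b (y + l) < \<eta>" using y by auto
    moreover have "far = indicator {..<min a (y - l)} \<eta>"
      using True y by (auto simp: far_def indicator_def)
    ultimately show ?thesis using True by (simp add: indicator_def algebra_simps)
  next
    case False
    with \<open>\<eta> \<notin> {a..b}\<close> have "b < \<eta>" by auto
    then have "\<not> \<eta> < a" "\<not> \<eta> < min a (y - l)" using y by auto
    moreover have "far = indicator {max b (y + l)<..} \<eta>"
      using \<open>b < \<eta>\<close> y by (auto simp: far_def indicator_def)
    ultimately show ?thesis using \<open>b < \<eta>\<close> by (simp add: indicator_def algebra_simps)
  qed
  ultimately show ?thesis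
    using False E_nonneg[of "y - \<eta>"] by (simp add: abs_mult mult_left_mono)
qed

lemma abs_exchange_outside_le_E_tail:
  assumes y: "a \<le> y" "y \<le> b" and "0 \<le> l" "0 \<le> \<delta>"
    and close: "\<And>\<eta>. \<eta> \<notin> {a..b} \<Longrightarrow> \<bar>y - \<eta>\<bar> \<le> l \<Longrightarrow> \<bar>f y ^ 4 - f \<eta> ^ 4\<bar> \<le> \<delta>"
  shows "\<bar>exchange f (- {a..b}) y\<bar>
    \<le> \<delta> * (E_tail (y - a) + E_tail (b - y)) + TM ^ 4 * (E_tail (max (y - a) l) + E_tail (max (b - y) l))"
proof -
  define B where "B \<eta> = \<delta> * (indicator {..<a} \<eta> * E (y - \<eta>)) + \<delta> * (indicator {b<..} \<eta> * E (y - \<eta>))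
    + TM ^ 4 * (indicator {..<min a (y - l)} \<eta> * E (y - \<eta>))
    + TM ^ 4 * (indicator {max b (y + l)<..} \<eta> * E (y - \<eta>))" for \<eta>
  have int_B: "integrable lborel B"
    unfolding B_def
    by (intro Bochner_Integration.integrable_add integrable_mult_right
        integrable_E_shift_lessThan integrable_E_shift_greaterThan)
  have "(LINT \<eta>|lborel. B \<eta>) = \<delta> * E_tail (y - a) + \<delta> * E_tail (b - y)
      + TM ^ 4 * E_tail (y - min a (y - l)) + TM ^ 4 * E_tail (max b (y + l) - y)"
    unfolding B_def
    by (simp add: Bochner_Integration.integral_add Bochner_Integration.integrable_add integrable_mult_right
        integrable_E_shift_lessThan integrable_E_shift_greaterThan
        integral_E_shift_lessThan integral_E_shift_greaterThan
        del: integral_mult_right integral_mult_right_zero)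
  also have "y - min a (y - l) = max (y - a) l" by simp
  also have "max b (y + l) - y = max (b - y) l" by simp
  finally have integral_B: "(LINT \<eta>|lborel. B \<eta>)
      = \<delta> * (E_tail (y - a) + E_tail (b - y)) + TM ^ 4 * (E_tail (max (y - a) l) + E_tail (max (b - y) l))"
    by (simp add: algebra_simps)
  have "\<bar>indicator (- {a..b}) \<eta> * E (y - \<eta>) * (f y ^ 4 - f \<eta> ^ 4)\<bar> \<le> B \<eta>" for \<eta>
    unfolding B_def using y \<open>0 \<le> \<delta>\<close> close by (rule abs_exchange_outside_integrand_le)
  then have "(LINT \<eta>|lborel. \<bar>indicator (- {a..b}) \<eta> * E (y - \<eta>) * (f y ^ 4 - f \<eta> ^ 4)\<bar>)
      \<le> (LINT \<eta>|lborel. B \<eta>)"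
    by (intro integral_mono int_B integrable_abs integrable_exchange_integrand) auto
  moreover have "\<bar>exchange f (- {a..b}) y\<bar>
      \<le> (LINT \<eta>|lborel. \<bar>indicator (- {a..b}) \<eta> * E (y - \<eta>) * (f y ^ 4 - f \<eta> ^ 4)\<bar>)"
    unfolding exchange_def by (rule integral_abs_bound)
  ultimately show ?thesis
    unfolding integral_B by linarith
qed

lemma abs_exchange_outside_le:
  assumes y: "a \<le> y" "y \<le> b" and "0 \<le> l" "0 \<le> \<delta>"
    and close: "\<And>\<eta>. \<eta> \<notin> {a..b} \<Longrightarrow> \<bar>y - \<eta>\<bar> \<le> l \<Longrightarrow> \<bar>f y ^ 4 - f \<eta> ^ 4\<bar> \<le> \<delta>"
  shows "\<bar>exchange f (- {a..b}) y\<bar>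
    \<le> (\<delta> + TM ^ 4 * exp (- l / 2)) / 2 * (exp (- (y - a) / 2) + exp (- (b - y) / 2))"
proof -
  have tail: "E_tail s \<le> exp (- s / 2) / 2" if "0 \<le> s" for s
  proof -
    have "exp (- s) \<le> exp (- s / 2)"
      using that by simp
    then show ?thesis
      using E_tail_le[OF that] by linarith
  qed
  have tail_max: "E_tail (max s l) \<le> exp (- l / 2) * exp (- s / 2) / 2" if "0 \<le> s" for s
  proof -
    have "E_tail (max s l) \<le> exp (- max s l) / 2"
      using E_tail_le[of "max s l"] that by simp
    also have "exp (- max s l) \<le> exp (- l / 2) * exp (- s / 2)"
      unfolding exp_add[symmetric] by simp
    finally show ?thesis by simp
  qed
  have "0 \<le> y - a" "0 \<le> b - y" using y by auto
  have "\<bar>exchange f (- {a..b}) y\<bar>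
      \<le> \<delta> * (E_tail (y - a) + E_tail (b - y)) + TM ^ 4 * (E_tail (max (y - a) l) + E_tail (max (b - y) l))"
    by (rule abs_exchange_outside_le_E_tail[OF assms])
  also have "\<dots> \<le> \<delta> * (exp (- (y - a) / 2) / 2 + exp (- (b - y) / 2) / 2)
      + TM ^ 4 * (exp (- l / 2) * exp (- (y - a) / 2) / 2 + exp (- l / 2) * exp (- (b - y) / 2) / 2)"
    using tail[OF \<open>0 \<le> y - a\<close>] tail[OF \<open>0 \<le> b - y\<close>] tail_max[OF \<open>0 \<le> y - a\<close>]
      tail_max[OF \<open>0 \<le> b - y\<close>] \<open>0 \<le> \<delta>\<close> TM_pos
    by (intro add_mono mult_left_mono) auto
  also have "\<dots> = (\<delta> + TM ^ 4 * exp (- l / 2)) / 2 * (exp (- (y - a) / 2) + exp (- (b - y) / 2))"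
    by (simp add: algebra_simps)
  finally show ?thesis .
qed

lemma integral_weighted_exchange_outside_ge:
  assumes "a \<le> b" "0 \<le> l" "0 \<le> \<delta>" "0 \<le> k" "k \<le> TM"
    and close: "\<And>y \<eta>. y \<in> {a..b} \<Longrightarrow> \<eta> \<notin> {a..b} \<Longrightarrow> \<bar>y - \<eta>\<bar> \<le> l \<Longrightarrow> \<bar>f y ^ 4 - f \<eta> ^ 4\<bar> \<le> \<delta>"
  shows "- (2 * TM * (\<delta> + TM ^ 4 * exp (- l / 2)))
    \<le> (LINT y|lborel. indicator {a..b} y * (f y - k) * exchange f (- {a..b}) y)"
proof -
  define W where "W y = TM * ((\<delta> + TM ^ 4 * exp (- l / 2)) / 2 * (exp (- (y - a) / 2) + exp (- (b - y) / 2)))"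
    for y
  have W_cont: "continuous_on {a..b} W"
    unfolding W_def by (intro continuous_intros) auto
  have "(LINT y|lborel. indicator {a..b} y * W y) = integral {a..b} W"
    by (rule lborel_integral_indicator_Icc(2)[OF W_cont])
  also have "\<dots> = integral {a..b} (\<lambda>y. TM * ((\<delta> + TM ^ 4 * exp (- l / 2)) / 2)
      * (exp (- (y - a) / 2) + exp (- (b - y) / 2)))"
    by (rule arg_cong[where f = "integral {a..b}"]) (simp add: fun_eq_iff W_def mult.assoc)
  also have "\<dots> = TM * ((\<delta> + TM ^ 4 * exp (- l / 2)) / 2)
      * integral {a..b} (\<lambda>y. exp (- (y - a) / 2) + exp (- (b - y) / 2))"
    by (intro integral_mult[symmetric] integrable_continuous_interval continuous_intros) auto
  also have "\<dots> \<le> TM * ((\<delta> + TM ^ 4 * exp (- l / 2)) / 2) * 4"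
    using TM_pos \<open>0 \<le> \<delta>\<close> by (intro mult_left_mono integral_exp_decay_from_endpoints_le \<open>a \<le> b\<close>) auto
  finally have integral_W: "(LINT y|lborel. indicator {a..b} y * W y) \<le> 2 * TM * (\<delta> + TM ^ 4 * exp (- l / 2))"
    by simp
  have "- (indicator {a..b} y * W y) \<le> indicator {a..b} y * (f y - k) * exchange f (- {a..b}) y" for y
  proof (cases "y \<in> {a..b}")
    case True
    have "\<bar>f y - k\<bar> \<le> TM"
      using f_nonneg[of y] f_le[of y] assms(4,5) by linarith
    then have "\<bar>(f y - k) * exchange f (- {a..b}) y\<bar> \<le> W y"
      unfolding W_def abs_mult using True assms
      by (intro mult_mono abs_exchange_outside_le) auto
    then show ?thesis using True by simp
  qed simp
  then have "(LINT y|lborel. - (indicator {a..b} y * W y))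
      \<le> (LINT y|lborel. indicator {a..b} y * (f y - k) * exchange f (- {a..b}) y)"
    by (intro integral_mono integrable_minus integrable_weighted_exchange lborel_integral_indicator_Icc(1) W_cont)
      auto
  then show ?thesis
    using integral_W by simp
qed

lemma integral_deriv_square_le:
  assumes "a \<le> b" "0 \<le> l" "0 \<le> \<delta>"
    and close: "\<And>y \<eta>. y \<in> {a..b} \<Longrightarrow> \<eta> \<notin> {a..b} \<Longrightarrow> \<bar>y - \<eta>\<bar> \<le> l \<Longrightarrow> \<bar>f y ^ 4 - f \<eta> ^ 4\<bar> \<le> \<delta>"
  shows "integral {a..b} (\<lambda>y. (deriv f y)^2) \<le> (deriv f b)^2 / (2 * c) + 2 * TM * (\<delta> + TM ^ 4 * exp (- l / 2))"
proof -
  define k where "k = f a"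
  define \<psi> where "\<psi> y = (deriv f y)^2 + (f y - k) * (deriv (deriv f) y - c * deriv f y)" for y
  have \<psi>_cont: "continuous_on {a..b} \<psi>"
    unfolding \<psi>_def by (intro continuous_intros continuous_on_f continuous_on_deriv_f continuous_on_deriv2_f)
  have deriv2_cont: "continuous_on {a..b} (\<lambda>y. (deriv f y)^2)"
    by (intro continuous_intros continuous_on_deriv_f)
  have "indicator {a..b} y * \<psi> y = indicator {a..b} y * (deriv f y)^2
      + indicator {a..b} y * (f y - k) * exchange f {a..b} y
      + indicator {a..b} y * (f y - k) * exchange f (- {a..b}) y" for y
    using ode_eq_exchange[of "{a..b}" y] by (simp add: \<psi>_def algebra_simps)
  then have "(LINT y|lborel. indicator {a..b} y * \<psi> y) = (LINT y|lborel. indicator {a..b} y * (deriv f y)^2)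
      + (LINT y|lborel. indicator {a..b} y * (f y - k) * exchange f {a..b} y)
      + (LINT y|lborel. indicator {a..b} y * (f y - k) * exchange f (- {a..b}) y)"
    by (simp add: Bochner_Integration.integral_add Bochner_Integration.integrable_add
        integrable_weighted_exchange lborel_integral_indicator_Icc(1)[OF deriv2_cont])
  moreover have "(LINT y|lborel. indicator {a..b} y * \<psi> y) = integral {a..b} \<psi>"
    by (rule lborel_integral_indicator_Icc(2)[OF \<psi>_cont])
  moreover have "integral {a..b} \<psi> \<le> (deriv f b)^2 / (2 * c)"
    unfolding \<psi>_def k_def
    by (rule integral_energy_le[OF \<open>a \<le> b\<close> c_pos has_deriv_f has_deriv_deriv_f])
  moreover have "(LINT y|lborel. indicator {a..b} y * (deriv f y)^2) = integral {a..b} (\<lambda>y. (deriv f y)^2)"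
    by (rule lborel_integral_indicator_Icc(2)[OF deriv2_cont])
  moreover have "- (2 * TM * (\<delta> + TM ^ 4 * exp (- l / 2)))
      \<le> (LINT y|lborel. indicator {a..b} y * (f y - k) * exchange f (- {a..b}) y)"
    using assms f_nonneg f_le unfolding k_def by (intro integral_weighted_exchange_outside_ge) auto
  ultimately show ?thesis
    using integral_weighted_exchange_inside_nonneg[of a b k] by linarith
qed

definition dirichlet :: "real \<Rightarrow> real \<Rightarrow> real" where
  "dirichlet u v = integral {u..v} (\<lambda>y. (deriv f y)^2)"

lemma integrable_deriv_square: "(\<lambda>y. (deriv f y)^2) integrable_on {u..v}"
  by (intro integrable_continuous_interval continuous_intros continuous_on_deriv_f)

lemma dirichlet_add: "u \<le> v \<Longrightarrow> v \<le> w \<Longrightarrow> dirichlet u w = dirichlet u v + dirichlet v w"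
  unfolding dirichlet_def
  by (rule Henstock_Kurzweil_Integration.integral_combine[symmetric]) (auto intro: integrable_deriv_square)

lemma dirichlet_nonneg: "0 \<le> dirichlet u v"
  unfolding dirichlet_def by (intro integral_nonneg integrable_deriv_square) auto

lemma dirichlet_mono:
  assumes "a \<le> u" "u \<le> v" "v \<le> b"
  shows "dirichlet u v \<le> dirichlet a b"
  using dirichlet_add[of a u b] dirichlet_add[of u v b] dirichlet_nonneg[of a u] dirichlet_nonneg[of v b] assms
  by simp

lemma square_diff_le_dirichlet: "u \<le> v \<Longrightarrow> (f v - f u)^2 \<le> (v - u) * dirichlet u v"
  unfolding dirichlet_def
  by (rule square_diff_le_integral_deriv_square)
    (auto intro: has_field_derivative_at_within[OF has_deriv_f] continuous_on_deriv_f)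

lemma dirichlet_bounded: "a \<le> b \<Longrightarrow> dirichlet a b \<le> (TM ^ 4 / c)^2 / (2 * c) + 2 * TM * TM ^ 4"
proof -
  assume "a \<le> b"
  have "dirichlet a b \<le> (deriv f b)^2 / (2 * c) + 2 * TM * (0 + TM ^ 4 * exp (- 0 / 2))"
    unfolding dirichlet_def by (rule integral_deriv_square_le[where l = 0 and \<delta> = 0, OF \<open>a \<le> b\<close>]) auto
  moreover have "\<bar>deriv f b\<bar> \<le> \<bar>TM ^ 4 / c\<bar>"
    using abs_deriv_le[of b] by linarith
  then have "(deriv f b)^2 \<le> (TM ^ 4 / c)^2"
    by (simp only: abs_le_square_iff)
  then have "(deriv f b)^2 / (2 * c) \<le> (TM ^ 4 / c)^2 / (2 * c)"
    using c_pos by (intro divide_right_mono) auto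
  ultimately show ?thesis by simp
qed

lemma dirichlet_tails_small:
  assumes "0 < \<epsilon>"
  shows "\<exists>R\<ge>0. \<forall>u v. u \<le> v \<longrightarrow> (v \<le> - R \<or> R \<le> u) \<longrightarrow> dirichlet u v \<le> \<epsilon>"
proof -
  obtain R1 where "0 \<le> R1" and R1: "\<And>x. R1 \<le> x \<Longrightarrow> dirichlet 0 x - dirichlet 0 R1 \<le> \<epsilon>"
    using mono_bounded_eventually_small_increment[of "dirichlet 0", OF _ dirichlet_bounded \<open>0 < \<epsilon>\<close>]
      dirichlet_mono[of 0 0] by blast
  obtain R2 where "0 \<le> R2" and R2: "\<And>x. R2 \<le> x \<Longrightarrow> dirichlet (- x) 0 - dirichlet (- R2) 0 \<le> \<epsilon>"
    using mono_bounded_eventually_small_increment[of "\<lambda>x. dirichlet (- x) 0", OF _ dirichlet_bounded \<open>0 < \<epsilon>\<close>]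
      dirichlet_mono[of "- _" "- _" 0 0] by force
  have "dirichlet u v \<le> \<epsilon>" if "R1 \<le> u" "u \<le> v" for u v
    using dirichlet_mono[of R1 u v v] dirichlet_add[of 0 R1 v] R1[of v] \<open>0 \<le> R1\<close> that by simp
  moreover have "dirichlet u v \<le> \<epsilon>" if "u \<le> v" "v \<le> - R2" for u v
    using dirichlet_mono[of u u v "- R2"] dirichlet_add[of u "- R2" 0] R2[of "- u"] \<open>0 \<le> R2\<close> that by simp
  ultimately show ?thesis
    using \<open>0 \<le> R1\<close> \<open>0 \<le> R2\<close> by (intro exI[of _ "max R1 R2"]) auto
qed

lemma exists_deriv_square_le_dirichlet: "\<exists>b\<in>{B..B + 1}. (deriv f b)^2 \<le> dirichlet B (B + 1)"
proof -
  have "\<exists>b\<in>{B..B + 1}. \<forall>y\<in>{B..B + 1}. (deriv f b)^2 \<le> (deriv f y)^2"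
    by (intro continuous_attains_inf) (auto intro!: continuous_intros continuous_on_deriv_f)
  then obtain b where b: "b \<in> {B..B + 1}" and min: "\<And>y. y \<in> {B..B + 1} \<Longrightarrow> (deriv f b)^2 \<le> (deriv f y)^2"
    by blast
  have "integral {B..B + 1} (\<lambda>y. (deriv f b)^2) \<le> dirichlet B (B + 1)"
    unfolding dirichlet_def by (intro integral_le integrable_deriv_square min) auto
  then show ?thesis using b by auto
qed

lemma abs_power4_diff_le_of_dirichlet:
  assumes "u \<le> v" "0 \<le> \<rho>" and small: "(v - u) * dirichlet u v \<le> \<rho>^2"
  shows "\<bar>f v ^ 4 - f u ^ 4\<bar> \<le> 4 * TM ^ 3 * \<rho>"
proof -
  have "(f v - f u)^2 \<le> \<rho>^2"
    using square_diff_le_dirichlet[OF \<open>u \<le> v\<close>] small by linarith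
  then have "\<bar>f v - f u\<bar> \<le> \<rho>"
    using power2_le_imp_le[of "\<bar>f v - f u\<bar>" \<rho>] \<open>0 \<le> \<rho>\<close> by simp
  have "\<bar>f v ^ 4 - f u ^ 4\<bar> \<le> real 4 * TM ^ (4 - 1) * \<bar>f v - f u\<bar>"
    by (rule abs_power_diff_le[OF f_nonneg f_le f_nonneg f_le])
  also have "\<dots> = 4 * TM ^ 3 * \<bar>f v - f u\<bar>"
    by simp
  also have "\<dots> \<le> 4 * TM ^ 3 * \<rho>"
    using \<open>\<bar>f v - f u\<bar> \<le> \<rho>\<close> TM_pos by (intro mult_left_mono) auto
  finally show ?thesis .
qed

lemma dirichlet_le_far_out:
  assumes "0 \<le> R" "0 \<le> l" "0 \<le> \<delta>" "a \<le> - R - l" "R + l \<le> b"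
    and tail_close: "\<And>u v. u \<le> v \<Longrightarrow> v - u \<le> l \<Longrightarrow> v \<le> - R \<or> R \<le> u \<Longrightarrow> \<bar>f v ^ 4 - f u ^ 4\<bar> \<le> \<delta>"
  shows "dirichlet a b \<le> (deriv f b)^2 / (2 * c) + 2 * TM * (\<delta> + TM ^ 4 * exp (- l / 2))"
proof -
  have close: "\<bar>f y ^ 4 - f \<eta> ^ 4\<bar> \<le> \<delta>"
    if "y \<in> {a..b}" "\<eta> \<notin> {a..b}" "\<bar>y - \<eta>\<bar> \<le> l" for y \<eta>
  proof (cases "\<eta> < a")
    case True
    with that(1) have "\<eta> \<le> y" by auto
    moreover have "y - \<eta> \<le> l"
      using that(3) by (simp add: abs_le_iff)
    ultimately have "y \<le> - R"
      using True \<open>a \<le> - R - l\<close> by linarith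
    then show ?thesis
      using tail_close[of \<eta> y] \<open>\<eta> \<le> y\<close> \<open>y - \<eta> \<le> l\<close> by (simp add: abs_minus_commute)
  next
    case False
    with that(1,2) have "y \<le> b" "b < \<eta>" by auto
    moreover have "\<eta> - y \<le> l"
      using that(3) by (simp add: abs_le_iff)
    ultimately have "R \<le> y" "y \<le> \<eta>"
      using \<open>R + l \<le> b\<close> by linarith+
    then show ?thesis
      using tail_close[of y \<eta>] \<open>\<eta> - y \<le> l\<close> by simp
  qed
  have "a \<le> b"
    using assms(1,2,4,5) by linarith
  then show ?thesis
    unfolding dirichlet_def using close \<open>0 \<le> l\<close> \<open>0 \<le> \<delta>\<close> by (intro integral_deriv_square_le) auto
qed

lemma power4_oscillation_tails_small:
  assumes "0 \<le> l" "0 < \<delta>"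
  shows "\<exists>R\<ge>0. \<forall>u v. u \<le> v \<longrightarrow> v - u \<le> l \<longrightarrow> (v \<le> - R \<or> R \<le> u) \<longrightarrow> \<bar>f v ^ 4 - f u ^ 4\<bar> \<le> \<delta>"
proof -
  define \<rho> where "\<rho> = \<delta> / (4 * TM ^ 3)"
  have "0 < \<rho>"
    using assms TM_pos by (simp add: \<rho>_def)
  then obtain R where "0 \<le> R"
    and tails: "\<And>u v. u \<le> v \<Longrightarrow> v \<le> - R \<or> R \<le> u \<Longrightarrow> dirichlet u v \<le> \<rho>^2 / (l + 1)"
    using dirichlet_tails_small[of "\<rho>^2 / (l + 1)"] \<open>0 \<le> l\<close> by auto
  have "\<bar>f v ^ 4 - f u ^ 4\<bar> \<le> \<delta>" if "u \<le> v" "v - u \<le> l" "v \<le> - R \<or> R \<le> u" for u v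
  proof -
    have "(v - u) * dirichlet u v \<le> (l + 1) * (\<rho>^2 / (l + 1))"
      using that tails[of u v] dirichlet_nonneg \<open>0 \<le> l\<close> by (intro mult_mono) auto
    then have "\<bar>f v ^ 4 - f u ^ 4\<bar> \<le> 4 * TM ^ 3 * \<rho>"
      using \<open>0 < \<rho>\<close> \<open>u \<le> v\<close> \<open>0 \<le> l\<close> by (intro abs_power4_diff_le_of_dirichlet) auto
    then show ?thesis
      using TM_pos by (simp add: \<rho>_def)
  qed
  then show ?thesis
    using \<open>0 \<le> R\<close> by blast
qed

lemma dirichlet_le_epsilon:
  assumes "a0 \<le> b0" "0 < \<epsilon>"
  shows "dirichlet a0 b0 \<le> \<epsilon>"
proof -
  define \<delta> where "\<delta> = \<epsilon> / (6 * TM)"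
  have "0 < \<delta>"
    using \<open>0 < \<epsilon>\<close> TM_pos by (simp add: \<delta>_def)
  obtain l where "0 \<le> l" and exp_l: "TM ^ 4 * exp (- l / 2) \<le> \<delta>"
    using exists_exp_decay_le[of "TM ^ 4" \<delta>] TM_pos \<open>0 < \<delta>\<close> by auto
  obtain R1 where "0 \<le> R1"
    and close: "\<And>u v. u \<le> v \<Longrightarrow> v - u \<le> l \<Longrightarrow> v \<le> - R1 \<or> R1 \<le> u \<Longrightarrow> \<bar>f v ^ 4 - f u ^ 4\<bar> \<le> \<delta>"
    using power4_oscillation_tails_small[OF \<open>0 \<le> l\<close> \<open>0 < \<delta>\<close>] by blast
  obtain R2 where tails: "\<And>u v. u \<le> v \<Longrightarrow> v \<le> - R2 \<or> R2 \<le> u \<Longrightarrow> dirichlet u v \<le> 2 * c * \<epsilon> / 3"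
    using dirichlet_tails_small[of "2 * c * \<epsilon> / 3"] c_pos \<open>0 < \<epsilon>\<close> by auto
  define B where "B = max b0 (max R1 R2 + l)"
  obtain b where b: "b \<in> {B..B + 1}" "(deriv f b)^2 \<le> dirichlet B (B + 1)"
    using exists_deriv_square_le_dirichlet by blast
  have "R2 \<le> B"
    using \<open>0 \<le> l\<close> by (simp add: B_def)
  then have "(deriv f b)^2 \<le> 2 * c * \<epsilon> / 3"
    using b(2) tails[of B "B + 1"] by simp
  then have "(deriv f b)^2 / (2 * c) \<le> \<epsilon> / 3"
    using c_pos by (simp add: field_simps)
  moreover have "dirichlet (min a0 (- R1 - l)) b \<le> (deriv f b)^2 / (2 * c) + 2 * TM * (\<delta> + TM ^ 4 * exp (- l / 2))"
    using b(1) \<open>0 \<le> R1\<close> \<open>0 \<le> l\<close> \<open>0 < \<delta>\<close> close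
    by (intro dirichlet_le_far_out) (auto simp: B_def)
  moreover have "2 * TM * (\<delta> + TM ^ 4 * exp (- l / 2)) \<le> 2 * \<epsilon> / 3"
    using mult_left_mono[OF exp_l, of "2 * TM"] TM_pos by (simp add: \<delta>_def field_simps)
  moreover have "dirichlet a0 b0 \<le> dirichlet (min a0 (- R1 - l)) b"
    using b(1) \<open>a0 \<le> b0\<close> by (intro dirichlet_mono) (auto simp: B_def)
  ultimately show ?thesis
    by linarith
qed

lemma f_eq: "f x = f y"
proof -
  have eq: "f v = f u" if "u \<le> v" for u v
  proof -
    have "dirichlet u v \<le> 0"
    proof (rule field_le_epsilon)
      fix e :: real
      assume "0 < e"
      then show "dirichlet u v \<le> 0 + e"
        using dirichlet_le_epsilon[OF that] by simp
    qed
    then have "(f v - f u)^2 \<le> 0"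
      using square_diff_le_dirichlet[OF that] mult_nonneg_nonpos[of "v - u" "dirichlet u v"] that
      by linarith
    then show ?thesis by simp
  qed
  show ?thesis
    using eq[of x y] eq[of y x] by (cases "x \<le> y") auto
qed

end

lemma solves_imp_constant:
  assumes "0 < c" "0 < lam" "solves c lam TM f"
  shows "f x = f y"
proof -
  interpret travelling_wave c lam TM f
    using assms by unfold_locales
  show ?thesis by (rule f_eq)
qed

lemma osc_eq_0_if_constant:
  assumes "A \<noteq> {}" and "\<And>x y. g x = g y"
  shows "osc A g = 0"
proof -
  have "{\<bar>g y1 - g y2\<bar> | y1 y2. y1 \<in> A \<and> y2 \<in> A} = {0}"
    using assms by auto
  then show ?thesis
    unfolding osc_def by simp
qed

theorem theorem3p4:
  fixes c lam TM :: real
  assumes "c > 0" and "0 < lam" and "lam < TM"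
  shows "\<exists>\<epsilon>0>0. \<forall>\<epsilon><\<epsilon>0. \<exists>L0>0. \<forall>f. solves c lam TM f \<longrightarrow>
           (\<forall>L>L0. osc {-L..L} f < \<epsilon> \<longrightarrow> osc {L..} f < 3 * \<epsilon>)"
proof (intro exI[of _ 1] conjI allI impI exI[of _ 1])
  fix \<epsilon> L :: real and f :: "real \<Rightarrow> real"
  assume "solves c lam TM f" "1 < L" "osc {-L..L} f < \<epsilon>"
  moreover have "osc {-L..L} f = 0" "osc {L..} f = 0"
    using solves_imp_constant[OF assms(1,2) \<open>solves c lam TM f\<close>] \<open>1 < L\<close>
    by (auto intro!: osc_eq_0_if_constant)
  ultimately show "osc {L..} f < 3 * \<epsilon>" by simp
qed simp_all

end
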